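(* Let $\theta:\mathbb R\to\mathbb R$ be nondecreasing with $\theta(x+\pi)=\theta(x)+\pi$ for all $x$. For $0\le\tau\le\pi/2$ define \[ J(\tau)=\frac1{2\pi}\int_0^{2\pi}\sin^2\frac{\theta(x+\tau)-\theta(x-\tau)}{2}\,\mathrm dx . \] If $M$ is nonnegative and nonincreasing on $[0,\pi/2]$, then \[ \int_0^{\pi/2}M(\tau)J(\tau)\,\mathrm d\tau\le\frac2\pi\int_0^{\pi/2}M(\tau)\,\tau\,\mathrm d\tau . \] *)

theory Defs
  imports "HOL-Analysis.Analysis"
begin

definition J :: "(real \<Rightarrow> real) \<Rightarrow> real \<Rightarrow> real" where
  "J \<theta> \<tau> = (1 / (2 * pi)) *
     integral {0..2 * pi} (\<lambda>x. (sin ((\<theta> (x + \<tau>) - \<theta> (x - \<tau>)) / 2))\<^sup>2)"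

end

theory Submission
  imports Defs
begin

(* Write hav u = sin^2 (u / 2) = (1 - cos u) / 2, so that J t is the mean of
   hav (theta (x + t) - theta (x - t)). Since hav u + hav (pi - u) = 1 and
   theta (x + pi) = theta x + pi, shifting x by pi / 2 gives J t + J (pi / 2 - t) = 1: the function
   J t - 2 t / pi is odd about pi / 4. Pairing t with pi / 2 - t, the theorem follows from the
   monotonicity of M once J t <= 2 t / pi on [0, pi / 4].

   J is nondecreasing in t, so it suffices to show J t <= m / n at t = pi m / (2 n) with 2 m <= n.
   Sampling x on the grid c + k pi / n turns the integrand into window sums
   sum_(k < n) hav (q (k + m) - q k) of nondecreasing sequences with q (k + n) = q k + pi. Such a sum
   equals m when n = 2 m, and deleting one point per period does not decrease it. The latter is the
   exchange inequality sum_(s <= k) hav (b s - a s) <= sum_(s < k) hav (b (s + 1) - a s) for a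
   nondecreasing chain a 0 <= ... <= a k = b 0 <= ... <= b k of span at most pi, proved by induction
   on k from the superadditivity of hav on [0, pi] and the concavity of differences of hav. *)

section \<open>Haversine\<close>

definition hav :: "real \<Rightarrow> real" where
  "hav u = (1 - cos u) / 2"

lemma sin_half_squared_eq_hav: "(sin (u / 2))\<^sup>2 = hav u"
  using cos_double_sin[of "u / 2"] by (simp add: hav_def)

lemma hav_0 [simp]: "hav 0 = 0"
  by (simp add: hav_def)

lemma hav_pi [simp]: "hav pi = 1"
  by (simp add: hav_def)

lemma hav_minus [simp]: "hav (- u) = hav u"
  by (simp add: hav_def)

lemma hav_add_hav_pi_minus: "hav u + hav (pi - u) = 1"
  by (simp add: hav_def field_simps)

lemma hav_bounds: "0 \<le> hav u" "hav u \<le> 1"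
  by (simp_all add: hav_def)

lemma hav_mono: "0 \<le> x \<Longrightarrow> x \<le> y \<Longrightarrow> y \<le> pi \<Longrightarrow> hav x \<le> hav y"
  using cos_monotone_0_pi_le[of x y] by (simp add: hav_def)

lemma concave_on_hav_diff:
  assumes "convex S" and "\<And>y. y \<in> S \<Longrightarrow> cos (y - A) \<le> cos (y - B)"
  shows "concave_on S (\<lambda>y. hav (y - A) - hav (y - B))"
proof (rule f''_le0_imp_concave)
  show "((\<lambda>y. hav (y - A) - hav (y - B))
      has_real_derivative (sin (y - A) - sin (y - B)) / 2) (at y)" for y
    unfolding hav_def by (auto intro!: derivative_eq_intros simp: field_simps)
  show "((\<lambda>y. (sin (y - A) - sin (y - B)) / 2)
      has_real_derivative (cos (y - A) - cos (y - B)) / 2) (at y)" for y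
    by (auto intro!: derivative_eq_intros simp: field_simps)
qed (use assms in auto)

lemma concave_on_hav_diff_rev:
  assumes "convex S" and "\<And>y. y \<in> S \<Longrightarrow> cos (A - y) \<le> cos (B - y)"
  shows "concave_on S (\<lambda>y. hav (A - y) - hav (B - y))"
proof -
  have cos_sym: "cos (y - C) = cos (C - y)" for y C :: real
    using cos_minus[of "C - y"] by simp
  have "concave_on S (\<lambda>y. hav (y - A) - hav (y - B))"
    by (intro concave_on_hav_diff assms(1)) (metis assms(2) cos_sym)
  moreover have "(\<lambda>y. hav (y - A) - hav (y - B)) = (\<lambda>y. hav (A - y) - hav (B - y))"
    by (intro ext) (metis hav_minus minus_diff_eq)
  ultimately show ?thesis
    by simp
qed

lemma hav_superadditive:
  assumes "0 \<le> x" "0 \<le> y" "x + y \<le> pi"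
  shows "hav x + hav y \<le> hav (x + y)"
proof -
  have "concave_on {0..pi - y} (\<lambda>t. hav (t - - y) - hav (t - 0))"
    using assms by (intro concave_on_hav_diff) (auto intro!: cos_monotone_0_pi_le)
  from concave_on_ge_min[OF this, of x]
  have "min (hav (0 + y) - hav 0) (hav (pi - y + y) - hav (pi - y)) \<le> hav (x + y) - hav x"
    using assms by simp
  then show ?thesis
    using hav_add_hav_pi_minus[of y] by simp
qed

section \<open>An exchange inequality for chains of span at most pi\<close>

definition pi_chain :: "nat \<Rightarrow> (nat \<Rightarrow> real) \<Rightarrow> (nat \<Rightarrow> real) \<Rightarrow> bool" where
  "pi_chain k a b \<longleftrightarrow>
     (\<forall>s<k. a s \<le> a (Suc s)) \<and> (\<forall>s<k. b s \<le> b (Suc s)) \<and> a k = b 0 \<and> b k - a 0 \<le> pi"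

definition aligned_hav_sum :: "nat \<Rightarrow> (nat \<Rightarrow> real) \<Rightarrow> (nat \<Rightarrow> real) \<Rightarrow> real" where
  "aligned_hav_sum k a b = (\<Sum>s\<le>k. hav (b s - a s))"

definition shifted_hav_sum :: "nat \<Rightarrow> (nat \<Rightarrow> real) \<Rightarrow> (nat \<Rightarrow> real) \<Rightarrow> real" where
  "shifted_hav_sum k a b = (\<Sum>s<k. hav (b (Suc s) - a s))"

lemma lift_Suc_mono_le_bounded:
  fixes a :: "nat \<Rightarrow> 'a::order"
  assumes "\<forall>s<k. a s \<le> a (Suc s)" and "i \<le> j" and "j \<le> k"
  shows "a i \<le> a j"
  by (rule lift_Suc_mono_le_ivl[of "{..<k}"]) (use assms in auto)

lemma aligned_le_shifted_if_first_eq: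
  assumes IH: "\<And>a b. pi_chain k a b \<Longrightarrow> aligned_hav_sum k a b \<le> shifted_hav_sum k a b"
    and chain: "pi_chain (Suc k) a b" and eq: "a 0 = a 1"
  shows "aligned_hav_sum (Suc k) a b \<le> shifted_hav_sum (Suc k) a b"
proof -
  define a' where "a' s = a (Suc s)" for s
  define b' where "b' s = (if s = 0 then b 0 else b (Suc s))" for s
  have am: "\<forall>s<Suc k. a s \<le> a (Suc s)" and bm: "\<forall>s<Suc k. b s \<le> b (Suc s)"
    and ab: "a (Suc k) = b 0" and span: "b (Suc k) - a 0 \<le> pi"
    using chain by (auto simp: pi_chain_def)
  have "b 0 \<le> b 2" if "0 < k"
    using lift_Suc_mono_le_bounded[OF bm, of 0 2] that by simp
  then have "pi_chain k a' b'"
    using am bm ab span eq by (auto simp: pi_chain_def a'_def b'_def numeral_2_eq_2 less_Suc_eq_0_disj)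
  then have "aligned_hav_sum k a' b' \<le> shifted_hav_sum k a' b'"
    by (rule IH)
  moreover have "aligned_hav_sum (Suc k) a b = hav (b 1 - a 1) + aligned_hav_sum k a' b'"
    unfolding aligned_hav_sum_def
    by (simp only: sum.atMost_shift sum.lessThan_Suc_shift) (simp add: a'_def b'_def eq)
  moreover have "shifted_hav_sum (Suc k) a b = hav (b 1 - a 1) + shifted_hav_sum k a' b'"
    unfolding shifted_hav_sum_def
    by (simp only: sum.lessThan_Suc_shift) (simp add: a'_def b'_def eq)
  ultimately show ?thesis
    by simp
qed

lemma aligned_le_shifted_if_last_eq:
  assumes IH: "\<And>a b. pi_chain k a b \<Longrightarrow> aligned_hav_sum k a b \<le> shifted_hav_sum k a b"
    and chain: "pi_chain (Suc k) a b" and eq: "b (Suc k) = b k"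
  shows "aligned_hav_sum (Suc k) a b \<le> shifted_hav_sum (Suc k) a b"
proof -
  define a' where "a' = a(k := a (Suc k))"
  have am: "\<forall>s<Suc k. a s \<le> a (Suc s)" and bm: "\<forall>s<Suc k. b s \<le> b (Suc s)"
    and ab: "a (Suc k) = b 0" and span: "b (Suc k) - a 0 \<le> pi"
    using chain by (auto simp: pi_chain_def)
  have "a s \<le> a (Suc k)" if "s < k" for s
    using lift_Suc_mono_le_bounded[OF am, of s "Suc k"] that by simp
  then have "pi_chain k a' b"
    using am bm ab span eq by (auto simp: pi_chain_def a'_def)
  then have "aligned_hav_sum k a' b \<le> shifted_hav_sum k a' b"
    by (rule IH)
  moreover have "(\<Sum>s<k. hav (b s - a' s)) = (\<Sum>s<k. hav (b s - a s))"
    and "(\<Sum>s<k. hav (b (Suc s) - a' s)) = (\<Sum>s<k. hav (b (Suc s) - a s))"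
    by (auto simp: a'_def intro!: sum.cong)
  then have "aligned_hav_sum (Suc k) a b = aligned_hav_sum k a' b + hav (b k - a k)"
    and "shifted_hav_sum (Suc k) a b = shifted_hav_sum k a' b + hav (b k - a k)"
    unfolding aligned_hav_sum_def shifted_hav_sum_def lessThan_Suc_atMost[symmetric] sum.lessThan_Suc
    using eq by (simp_all add: a'_def)
  ultimately show ?thesis
    by simp
qed

lemma shifted_minus_aligned_hav_sum:
  "shifted_hav_sum (Suc (Suc j)) a b - aligned_hav_sum (Suc (Suc j)) a b =
     hav (b 1 - a 0) - hav (b 0 - a 0)
     + hav (b (Suc (Suc j)) - a (Suc j)) - hav (b (Suc (Suc j)) - a (Suc (Suc j)))
     + ((\<Sum>s<j. hav (b (Suc (Suc s)) - a (Suc s))) - (\<Sum>s\<le>j. hav (b (Suc s) - a (Suc s))))"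
  unfolding shifted_hav_sum_def aligned_hav_sum_def
  by (subst sum.lessThan_Suc_shift, subst sum.atMost_Suc_shift) simp

lemma aligned_le_shifted_step:
  assumes IH: "\<And>a b. pi_chain (Suc j) a b \<Longrightarrow>
      aligned_hav_sum (Suc j) a b \<le> shifted_hav_sum (Suc j) a b"
    and chain: "pi_chain (Suc (Suc j)) a b"
  shows "aligned_hav_sum (Suc (Suc j)) a b \<le> shifted_hav_sum (Suc (Suc j)) a b"
proof -
  define k where "k = Suc (Suc j)"
  have am: "\<forall>s<k. a s \<le> a (Suc s)" and bm: "\<forall>s<k. b s \<le> b (Suc s)"
    and ab: "a k = b 0" and span: "b k - a 0 \<le> pi"
    using chain by (auto simp: pi_chain_def k_def)
  have a01: "a 0 \<le> a 1" and ajk: "a (Suc j) \<le> a k" and b01: "b 0 \<le> b 1" and bjk: "b (Suc j) \<le> b k"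
    using am bm by (auto simp: k_def)
  have a1j: "a 1 \<le> a (Suc j)" and b1j: "b 1 \<le> b (Suc j)"
    using lift_Suc_mono_le_bounded[OF am, of 1 "Suc j"] lift_Suc_mono_le_bounded[OF bm, of 1 "Suc j"]
    by (simp_all add: k_def)
  \<comment> \<open>E v w + C is the difference of the two sums after replacing a 0 by v and b k by w.
    It is concave in v and along the line w = v + pi, so on the admissible region
    v \<le> a 1, b (Suc j) \<le> w, w - v \<le> pi its minimum is attained where v = a 1 or
    w = b (Suc j): the degenerate chains covered by the induction hypothesis.\<close>
  define E where "E v w = hav (b 1 - v) - hav (b 0 - v) + hav (w - a (Suc j)) - hav (w - a k)" for v w
  define C where
    "C = (\<Sum>s<j. hav (b (Suc (Suc s)) - a (Suc s))) - (\<Sum>s\<le>j. hav (b (Suc s) - a (Suc s)))"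
  have split: "shifted_hav_sum k (a(0 := v)) (b(k := w)) - aligned_hav_sum k (a(0 := v)) (b(k := w))
      = E v w + C" for v w
  proof -
    have "(\<Sum>s<j. hav ((b(k := w)) (Suc (Suc s)) - (a(0 := v)) (Suc s)))
        = (\<Sum>s<j. hav (b (Suc (Suc s)) - a (Suc s)))"
      and "(\<Sum>s\<le>j. hav ((b(k := w)) (Suc s) - (a(0 := v)) (Suc s)))
        = (\<Sum>s\<le>j. hav (b (Suc s) - a (Suc s)))"
      by (auto simp: k_def intro!: sum.cong)
    then show ?thesis
      unfolding k_def shifted_minus_aligned_hav_sum E_def C_def by (simp add: k_def)
  qed
  have first_eq: "0 \<le> E (a 1) w + C" if "b (Suc j) \<le> w" "w \<le> a 1 + pi" for w
  proof -
    have "pi_chain k (a(0 := a 1)) (b(k := w))"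
      using am bm ab that by (auto simp: pi_chain_def k_def less_Suc_eq)
    then have "aligned_hav_sum k (a(0 := a 1)) (b(k := w)) \<le> shifted_hav_sum k (a(0 := a 1)) (b(k := w))"
      using aligned_le_shifted_if_first_eq[OF IH, of "a(0 := a 1)" "b(k := w)"] by (simp add: k_def)
    then show ?thesis
      using split[of "a 1" w] by simp
  qed
  have last_eq: "0 \<le> E v (b (Suc j)) + C" if "b (Suc j) - pi \<le> v" "v \<le> a 1" for v
  proof -
    have "pi_chain k (a(0 := v)) (b(k := b (Suc j)))"
      using am bm ab that by (auto simp: pi_chain_def k_def less_Suc_eq)
    then have "aligned_hav_sum k (a(0 := v)) (b(k := b (Suc j)))
        \<le> shifted_hav_sum k (a(0 := v)) (b(k := b (Suc j)))"
      using aligned_le_shifted_if_last_eq[OF IH, of "a(0 := v)" "b(k := b (Suc j))"] by (simp add: k_def)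
    then show ?thesis
      using split[of v "b (Suc j)"] by simp
  qed
  have "concave_on {b k - pi..a 1} (\<lambda>v. hav (b 1 - v) - hav (b 0 - v))"
    using ab span b01 b1j bjk a1j ajk
    by (intro concave_on_hav_diff_rev) (auto intro!: cos_monotone_0_pi_le)
  from concave_on_ge_min[OF this, of "a 0"]
  have concave_v: "min (E (b k - pi) (b k)) (E (a 1) (b k)) \<le> E (a 0) (b k)"
    using span a01 unfolding E_def by (auto simp: min_def)
  have "concave_on {b (Suc j)..a 1 + pi}
      (\<lambda>w. (hav (b 1 + pi - w) - hav (b 0 + pi - w)) + (hav (w - a (Suc j)) - hav (w - a k)))"
    using ab span b01 b1j bjk a1j ajk a01
    by (intro concave_on_add concave_on_hav_diff_rev concave_on_hav_diff) (auto intro!: cos_monotone_0_pi_le)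
  from concave_on_ge_min[OF this, of "b k"]
  have concave_w: "min (E (b (Suc j) - pi) (b (Suc j))) (E (a 1) (a 1 + pi)) \<le> E (b k - pi) (b k)"
    using span a01 bjk unfolding E_def by (auto simp: min_def algebra_simps)
  have "0 \<le> E (a 0) (b k) + C"
    using concave_v concave_w first_eq[of "b k"] first_eq[of "a 1 + pi"] last_eq[of "b (Suc j) - pi"]
      span a01 bjk by linarith
  then show ?thesis
    using split[of "a 0" "b k"] by (simp add: k_def)
qed

theorem aligned_le_shifted_hav_sum:
  "pi_chain k a b \<Longrightarrow> aligned_hav_sum k a b \<le> shifted_hav_sum k a b"
proof (induction k arbitrary: a b rule: nat_less_induct)
  case (1 k)
  consider "k = 0" | "k = 1" | j where "k = Suc (Suc j)"
    by (metis One_nat_def not0_implies_Suc)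
  then show ?case
  proof cases
    case 1
    then show ?thesis
      using "1.prems" by (simp add: aligned_hav_sum_def shifted_hav_sum_def pi_chain_def)
  next
    case 2
    then have "a 0 \<le> a 1" "b 0 \<le> b 1" "a 1 = b 0" "b 1 - a 0 \<le> pi"
      using "1.prems" by (auto simp: pi_chain_def)
    then have "hav (b 0 - a 0) + hav (b 1 - b 0) \<le> hav ((b 0 - a 0) + (b 1 - b 0))"
      by (intro hav_superadditive) auto
    then show ?thesis
      using 2 \<open>a 1 = b 0\<close> by (simp add: aligned_hav_sum_def shifted_hav_sum_def)
  next
    case 3
    then show ?thesis
      using "1.IH" "1.prems" aligned_le_shifted_step[of j a b] by simp
  qed
qed

section \<open>Window sums of sequences with q (k + n) = q k + pi\<close>

definition hav_window_sum :: "nat \<Rightarrow> nat \<Rightarrow> (nat \<Rightarrow> real) \<Rightarrow> real" where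
  "hav_window_sum n m q = (\<Sum>k<n. hav (q (k + m) - q k))"

lemma sum_lessThan_add:
  fixes f :: "nat \<Rightarrow> 'a::comm_monoid_add"
  shows "(\<Sum>k<a + b. f k) = (\<Sum>k<a. f k) + (\<Sum>k<b. f (a + k))"
  by (induction b) (simp_all add: add.assoc)

lemma hav_window_sum_double:
  assumes "\<And>k. q (k + n) = q k + pi"
  shows "hav_window_sum (n + n) m q = 2 * hav_window_sum n m q"
proof -
  have "hav (q (n + k + m) - q (n + k)) = hav (q (k + m) - q k)" for k
    using assms[of "k + m"] assms[of k] by (simp add: ac_simps)
  then show ?thesis
    unfolding hav_window_sum_def sum_lessThan_add by simp
qed

lemma hav_window_sum_half_period:
  assumes "\<And>k. q (k + 2 * m) = q k + pi"
  shows "hav_window_sum (2 * m) m q = m"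
proof -
  have "hav (q (m + k + m) - q (m + k)) = 1 - hav (q (k + m) - q k)" for k
  proof -
    have "q (m + k + m) - q (m + k) = pi - (q (k + m) - q k)"
      using assms[of k] by (simp add: ac_simps flip: mult_2)
    then show ?thesis
      using hav_add_hav_pi_minus[of "q (k + m) - q k"] by simp
  qed
  then show ?thesis
    unfolding hav_window_sum_def mult_2 sum_lessThan_add by (simp add: sum_subtractf)
qed

lemma hav_window_sum_Suc_split:
  assumes "m \<le> n"
  shows "hav_window_sum (Suc n) m q =
    hav_window_sum (n - m) m q + aligned_hav_sum m (\<lambda>r. q (n - m + r)) (\<lambda>r. q (n + r))"
proof -
  have "Suc n = (n - m) + Suc m"
    using assms by simp
  then have "hav_window_sum (Suc n) m q =
      hav_window_sum (n - m) m q + (\<Sum>r<Suc m. hav (q (n - m + r + m) - q (n - m + r)))"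
    unfolding hav_window_sum_def by (simp only: sum_lessThan_add)
  also have "(\<Sum>r<Suc m. hav (q (n - m + r + m) - q (n - m + r))) =
      aligned_hav_sum m (\<lambda>r. q (n - m + r)) (\<lambda>r. q (n + r))"
    unfolding aligned_hav_sum_def lessThan_Suc_atMost using assms by (simp add: ac_simps)
  finally show ?thesis .
qed

lemma hav_window_sum_skip_split:
  assumes "m \<le> n"
  shows "hav_window_sum n m (\<lambda>k. q (k + k div n)) =
    hav_window_sum (n - m) m q + shifted_hav_sum m (\<lambda>r. q (n - m + r)) (\<lambda>r. q (n + r))"
proof -
  have "(\<Sum>k<n. f k) = (\<Sum>k<n - m. f k) + (\<Sum>r<m. f (n - m + r))" for f :: "nat \<Rightarrow> real"
    using sum_lessThan_add[of f "n - m" m] assms by simp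
  then have "hav_window_sum n m (\<lambda>k. q (k + k div n)) =
      (\<Sum>k<n - m. hav (q (k + m + (k + m) div n) - q (k + k div n)))
      + (\<Sum>r<m. hav (q (n - m + r + m + (n - m + r + m) div n) - q (n - m + r + (n - m + r) div n)))"
    unfolding hav_window_sum_def by blast
  also have "(\<Sum>k<n - m. hav (q (k + m + (k + m) div n) - q (k + k div n))) = hav_window_sum (n - m) m q"
    unfolding hav_window_sum_def by (intro sum.cong) auto
  also have "(\<Sum>r<m. hav (q (n - m + r + m + (n - m + r + m) div n) - q (n - m + r + (n - m + r) div n)))
      = shifted_hav_sum m (\<lambda>r. q (n - m + r)) (\<lambda>r. q (n + r))"
    unfolding shifted_hav_sum_def
  proof (intro sum.cong refl)
    fix r
    assume "r \<in> {..<m}"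
    then have shift: "n - m + r + m = n + r" and "(n + r) div n = 1" and "(n - m + r) div n = 0"
      using assms by auto
    then show "hav (q (n - m + r + m + (n - m + r + m) div n) - q (n - m + r + (n - m + r) div n))
        = hav (q (n + Suc r) - q (n - m + r))"
      unfolding shift by simp
  qed
  finally show ?thesis .
qed

lemma hav_window_sum_le_skip:
  assumes "2 * m \<le> n" and "mono q" and "\<And>k. q (k + Suc n) = q k + pi"
  shows "hav_window_sum (Suc n) m q \<le> hav_window_sum n m (\<lambda>k. q (k + k div n))"
proof -
  have "q (n + m) \<le> q (n - m) + pi"
    using monoD[OF assms(2), of "n + m" "n - m + Suc n"] assms(1) assms(3)[of "n - m"] by simp
  then have "pi_chain m (\<lambda>r. q (n - m + r)) (\<lambda>r. q (n + r))"
    using assms(1,2) by (auto simp: pi_chain_def monoD)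
  moreover have "m \<le> n"
    using assms(1) by simp
  ultimately show ?thesis
    unfolding hav_window_sum_Suc_split[OF \<open>m \<le> n\<close>] hav_window_sum_skip_split[OF \<open>m \<le> n\<close>]
    by (simp add: aligned_le_shifted_hav_sum)
qed

theorem hav_window_sum_le:
  assumes "2 * m \<le> n" and "mono q" and "\<And>k. q (k + n) = q k + pi"
  shows "hav_window_sum n m q \<le> m"
proof (cases "m = 0")
  case True
  then show ?thesis
    by (simp add: hav_window_sum_def)
next
  case False
  from assms show ?thesis
  proof (induction n arbitrary: q rule: nat_induct_at_least)
    case base
    then show ?case
      using hav_window_sum_half_period[of q m] by simp
  next
    case (Suc n)
    \<comment> \<open>q' omits the points q (n + j * Suc n), one from each period of q\<close>
    define q' where "q' = (\<lambda>k. q (k + k div n))"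
    have "mono q'"
      unfolding q'_def mono_def by (auto intro!: monoD[OF Suc.prems(1)] add_mono div_le_mono)
    moreover have "q' (k + n) = q' k + pi" for k
    proof -
      have "k + n + (k + n) div n = (k + k div n) + Suc n"
        using Suc.hyps False by simp
      then show ?thesis
        unfolding q'_def using Suc.prems(2) by metis
    qed
    ultimately have "hav_window_sum n m q' \<le> m"
      by (rule Suc.IH)
    moreover have "hav_window_sum (Suc n) m q \<le> hav_window_sum n m q'"
      using hav_window_sum_le_skip[of m n q] Suc.hyps Suc.prems by (simp only: q'_def)
    ultimately show ?case
      by simp
  qed
qed

section \<open>Bounds on J\<close>

definition J_integrand :: "(real \<Rightarrow> real) \<Rightarrow> real \<Rightarrow> real \<Rightarrow> real" where
  "J_integrand \<theta> t x = hav (\<theta> (x + t) - \<theta> (x - t))"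

lemma J_eq_integral_J_integrand: "J \<theta> t = integral {0..2 * pi} (J_integrand \<theta> t) / (2 * pi)"
  unfolding J_def J_integrand_def sin_half_squared_eq_hav by simp

lemma integrable_J_integrand:
  assumes "mono \<theta>"
  shows "J_integrand \<theta> t integrable_on {a..b}"
proof -
  have [measurable]: "\<theta> \<in> borel_measurable borel"
    using assms by (rule borel_measurable_mono)
  have "J_integrand \<theta> t \<in> borel_measurable borel"
    unfolding J_integrand_def hav_def by measurable
  then have "J_integrand \<theta> t \<in> borel_measurable (lebesgue_on {a..b})"
    by (intro measurable_restrict_space1 measurable_completion) simp
  then have "J_integrand \<theta> t absolutely_integrable_on {a..b}"
    by (rule measurable_bounded_by_integrable_imp_absolutely_integrable[where g = "\<lambda>_. 1"])
       (auto simp: J_integrand_def hav_bounds)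
  then show ?thesis
    by (simp add: absolutely_integrable_on_def)
qed

lemma integrable_on_shift:
  fixes f :: "real \<Rightarrow> real"
  assumes "\<And>a b. f integrable_on {a..b}"
  shows "(\<lambda>x. f (x + c)) integrable_on {a..b}"
  using integrable_shift_real_ivl[of f "a + c" "b + c" c] assms by simp

lemma integral_eq_integral_sum_shifts:
  fixes f :: "real \<Rightarrow> real"
  assumes "0 < d" and integrable: "\<And>a b. f integrable_on {a..b}"
  shows "integral {0..real N * d} f = integral {0..d} (\<lambda>c. \<Sum>k<N. f (c + real k * d))"
proof (induction N)
  case 0
  then show ?case
    by simp
next
  case (Suc N)
  have "integral {0..real (Suc N) * d} f
      = integral {0..real N * d} f + integral {real N * d..real (Suc N) * d} f"
    using assms
    by (intro Henstock_Kurzweil_Integration.integral_combine[symmetric]) (auto simp: algebra_simps)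
  also have "integral {real N * d..real (Suc N) * d} f = integral {0..d} (\<lambda>c. f (c + real N * d))"
    using integral_shift_real_ivl[of "real N * d" "real N * d" "real (Suc N) * d" f]
    by (simp add: algebra_simps)
  also have "integral {0..real N * d} f + integral {0..d} (\<lambda>c. f (c + real N * d)) =
      integral {0..d} (\<lambda>c. (\<Sum>k<N. f (c + real k * d)) + f (c + real N * d))"
    unfolding Suc.IH by (intro integral_add[symmetric] integrable_sum integrable_on_shift integrable) auto
  finally show ?case
    by simp
qed

lemma integral_shift_periodic:
  fixes g :: "real \<Rightarrow> real"
  assumes "0 < d" and "\<And>a b. g integrable_on {a..b}" and "\<And>x. g (x + real N * d) = g x"
  shows "integral {0..real N * d} (\<lambda>x. g (x + d)) = integral {0..real N * d} g"
proof -
  have "(\<Sum>k<N. g (c + real k * d + d)) = (\<Sum>k<N. g (c + real k * d))" for c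
  proof -
    have "(\<Sum>k<N. g (c + real k * d + d)) = (\<Sum>k<N. g (c + real (Suc k) * d))"
      by (simp add: algebra_simps)
    also have "\<dots> = (\<Sum>k<N. g (c + real k * d))"
      using sum.lessThan_Suc_shift[of "\<lambda>k. g (c + real k * d)" N] assms(3)[of c]
      by (simp add: algebra_simps)
    finally show ?thesis .
  qed
  then show ?thesis
    using integral_eq_integral_sum_shifts[OF assms(1,2)]
      integral_eq_integral_sum_shifts[OF assms(1) integrable_on_shift[OF assms(2)]]
    by (simp add: add.assoc)
qed

lemma J_le_at_grid:
  fixes m n :: nat
  assumes "mono \<theta>" and "\<And>x. \<theta> (x + pi) = \<theta> x + pi" and "2 * m \<le> n"
  shows "J \<theta> (pi * m / (2 * n)) \<le> m / n"
proof (cases "n = 0")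
  case True
  \<comment> \<open>division by zero makes both sides 0\<close>
  then show ?thesis
    by (simp add: J_def)
next
  case False
  define t where "t = pi * m / (2 * n)"
  define d where "d = pi / n"
  have "0 < d"
    using False by (simp add: d_def)
  have "real n * d = pi" and "real m * d = 2 * t"
    using False by (simp_all add: d_def t_def)
  have "integral {0..2 * pi} (J_integrand \<theta> t)
      = integral {0..d} (\<lambda>c. \<Sum>k<2 * n. J_integrand \<theta> t (c + real k * d))"
    using integral_eq_integral_sum_shifts[OF \<open>0 < d\<close> integrable_J_integrand[OF assms(1)], of "2 * n"]
      \<open>real n * d = pi\<close> by (simp add: mult.assoc)
  also have "\<dots> \<le> integral {0..d} (\<lambda>c. 2 * real m)"
  proof (rule integral_le)
    show "(\<lambda>c. \<Sum>k<2 * n. J_integrand \<theta> t (c + real k * d)) integrable_on {0..d}"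
      by (intro integrable_sum integrable_on_shift integrable_J_integrand assms(1)) auto
    fix c
    define q where "q k = \<theta> (c - t + real k * d)" for k
    have "mono q"
      unfolding q_def mono_def using \<open>0 < d\<close> by (auto intro!: monoD[OF assms(1)])
    have q_period: "q (k + n) = q k + pi" for k
      unfolding q_def using assms(2)[of "c - t + real k * d"] \<open>real n * d = pi\<close>
      by (simp add: algebra_simps)
    have "J_integrand \<theta> t (c + real k * d) = hav (q (k + m) - q k)" for k
      unfolding J_integrand_def q_def using \<open>real m * d = 2 * t\<close> by (simp add: algebra_simps)
    then have "(\<Sum>k<2 * n. J_integrand \<theta> t (c + real k * d)) = hav_window_sum (n + n) m q"
      by (simp add: hav_window_sum_def mult_2)
    also have "\<dots> = 2 * hav_window_sum n m q"
      using q_period by (rule hav_window_sum_double)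
    also have "\<dots> \<le> 2 * real m"
      using hav_window_sum_le[of m n q] assms(3) \<open>mono q\<close> q_period by simp
    finally show "(\<Sum>k<2 * n. J_integrand \<theta> t (c + real k * d)) \<le> 2 * real m" .
  qed (rule integrable_const_ivl)
  also have "\<dots> = 2 * pi * (m / n)"
    using \<open>0 < d\<close> by (simp add: d_def)
  finally show ?thesis
    unfolding t_def[symmetric] J_eq_integral_J_integrand by (simp add: field_simps)
qed

lemma J_integrand_arg_bounds:
  assumes "mono \<theta>" and "\<And>x. \<theta> (x + pi) = \<theta> x + pi" and "0 \<le> t" and "t \<le> pi / 2"
  shows "0 \<le> \<theta> (x + t) - \<theta> (x - t)" and "\<theta> (x + t) - \<theta> (x - t) \<le> pi"
proof -
  show "0 \<le> \<theta> (x + t) - \<theta> (x - t)"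
    using assms(1,3) by (simp add: monoD)
  have "\<theta> (x + t) \<le> \<theta> (x - t + pi)"
    using assms(4) by (intro monoD[OF assms(1)]) simp
  then show "\<theta> (x + t) - \<theta> (x - t) \<le> pi"
    using assms(2)[of "x - t"] by simp
qed

lemma J_mono:
  assumes "mono \<theta>" and "\<And>x. \<theta> (x + pi) = \<theta> x + pi" and "0 \<le> t" and "t \<le> t'" and "t' \<le> pi / 2"
  shows "J \<theta> t \<le> J \<theta> t'"
proof -
  have "integral {0..2 * pi} (J_integrand \<theta> t) \<le> integral {0..2 * pi} (J_integrand \<theta> t')"
  proof (rule integral_le)
    fix x
    have "\<theta> (x + t) - \<theta> (x - t) \<le> \<theta> (x + t') - \<theta> (x - t')"
      using assms(4) by (intro diff_mono monoD[OF assms(1)]) auto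
    moreover have "0 \<le> \<theta> (x + t) - \<theta> (x - t)"
      using J_integrand_arg_bounds(1)[where \<theta> = \<theta> and t = t and x = x, OF assms(1,2)] assms(3-5) by simp
    moreover have "\<theta> (x + t') - \<theta> (x - t') \<le> pi"
      using J_integrand_arg_bounds(2)[where \<theta> = \<theta> and t = t' and x = x, OF assms(1,2)] assms(3-5) by simp
    ultimately show "J_integrand \<theta> t x \<le> J_integrand \<theta> t' x"
      unfolding J_integrand_def by (intro hav_mono)
  qed (use integrable_J_integrand[OF assms(1)] in auto)
  then show ?thesis
    unfolding J_eq_integral_J_integrand by (simp add: divide_right_mono)
qed

lemma J_le_linear:
  assumes "mono \<theta>" and "\<And>x. \<theta> (x + pi) = \<theta> x + pi" and "0 \<le> t" and "t \<le> pi / 4"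
  shows "J \<theta> t \<le> 2 * t / pi"
proof (rule field_le_epsilon)
  fix e :: real
  assume "0 < e"
  then obtain N where "inverse (real (Suc N)) < e"
    using reals_Archimedean by blast
  define n where "n = 2 * Suc N"
  define m where "m = nat \<lceil>2 * t * n / pi\<rceil>"
  have "2 * t * n / pi \<le> m" and "m \<le> 2 * t * n / pi + 1"
    using assms(3) by (simp_all add: m_def)
  have "4 * t * Suc N \<le> pi * Suc N"
    using assms(4) by (intro mult_right_mono) auto
  then have "2 * t * n / pi \<le> Suc N"
    by (simp add: n_def field_simps)
  then have "m \<le> Suc N"
    unfolding m_def by (simp add: nat_le_iff ceiling_le_iff)
  then have "2 * m \<le> n"
    by (simp add: n_def)
  have "t \<le> pi * m / (2 * n)"
    using \<open>2 * t * n / pi \<le> m\<close> by (simp add: n_def field_simps)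
  moreover have "pi * m / (2 * n) \<le> pi / 2"
  proof -
    have "pi * m \<le> pi * n"
      using \<open>2 * m \<le> n\<close> by (intro mult_left_mono) auto
    then show ?thesis
      by (simp add: n_def field_simps)
  qed
  ultimately have "J \<theta> t \<le> J \<theta> (pi * m / (2 * n))"
    using assms by (intro J_mono) auto
  also have "\<dots> \<le> m / n"
    using assms(1,2) \<open>2 * m \<le> n\<close> by (rule J_le_at_grid)
  also have "\<dots> \<le> (2 * t * n / pi + 1) / n"
    using \<open>m \<le> 2 * t * n / pi + 1\<close> by (intro divide_right_mono) auto
  also have "\<dots> = 2 * t / pi + 1 / n"
    by (simp add: n_def field_simps)
  also have "\<dots> \<le> 2 * t / pi + e"
  proof -
    have "1 / real n \<le> inverse (real (Suc N))"
      by (simp add: n_def divide_simps)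
    then show ?thesis
      using \<open>inverse (real (Suc N)) < e\<close> by linarith
  qed
  finally show "J \<theta> t \<le> 2 * t / pi + e" .
qed

lemma J_integrand_add_complement:
  assumes "\<And>x. \<theta> (x + pi) = \<theta> x + pi"
  shows "J_integrand \<theta> (pi / 2 - t) (x + pi / 2) = 1 - J_integrand \<theta> t x"
proof -
  have "\<theta> (x + pi / 2 + (pi / 2 - t)) = \<theta> (x - t) + pi"
    using assms[of "x - t"] by (simp add: algebra_simps)
  then show ?thesis
    using hav_add_hav_pi_minus[of "\<theta> (x + t) - \<theta> (x - t)"]
    unfolding J_integrand_def by (simp add: algebra_simps)
qed

lemma J_add_J_complement:
  assumes "mono \<theta>" and "\<And>x. \<theta> (x + pi) = \<theta> x + pi"
  shows "J \<theta> t + J \<theta> (pi / 2 - t) = 1"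
proof -
  have periodic: "J_integrand \<theta> s (x + real 4 * (pi / 2)) = J_integrand \<theta> s x" for s x
    using assms(2)[of "x + s"] assms(2)[of "x + s + pi"] assms(2)[of "x - s"] assms(2)[of "x - s + pi"]
    unfolding J_integrand_def by (simp add: algebra_simps)
  have "integral {0..2 * pi} (J_integrand \<theta> (pi / 2 - t))
      = integral {0..2 * pi} (\<lambda>x. J_integrand \<theta> (pi / 2 - t) (x + pi / 2))"
    using integral_shift_periodic[of "pi / 2" "J_integrand \<theta> (pi / 2 - t)" 4]
      integrable_J_integrand[OF assms(1)] periodic by simp
  also have "\<dots> = integral {0..2 * pi} (\<lambda>x. 1 - J_integrand \<theta> t x)"
    using J_integrand_add_complement[of \<theta>, OF assms(2)] by simp
  also have "\<dots> = 2 * pi - integral {0..2 * pi} (J_integrand \<theta> t)"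
    using integrable_J_integrand[OF assms(1)] by (subst integral_diff) auto
  finally show ?thesis
    unfolding J_eq_integral_J_integrand by (simp add: field_simps)
qed

lemma integrable_antimono_nonneg_mult_mono_on:
  fixes M f :: "real \<Rightarrow> real"
  assumes "\<And>t. t \<in> {a..b} \<Longrightarrow> 0 \<le> M t"
    and "\<And>s t. s \<in> {a..b} \<Longrightarrow> t \<in> {a..b} \<Longrightarrow> s \<le> t \<Longrightarrow> M t \<le> M s"
    and "mono_on {a..b} f"
  shows "(\<lambda>t. M t * f t) integrable_on {a..b}"
proof -
  have "mono_on {a..b} (\<lambda>t. - M t)"
    using assms(2) by (auto simp: mono_on_def)
  then have "(\<lambda>t. - M t) integrable_on {a..b}"
    by (rule integrable_on_mono_on)
  then have "M absolutely_integrable_on {a..b}"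
    using assms(1) by (intro nonnegative_absolutely_integrable_1) (auto simp: integrable_neg_iff)
  moreover have "f \<in> borel_measurable (lebesgue_on {a..b})"
    using integrable_mono_on[OF assms(3)] by (rule borel_measurable_integrable)
  moreover have "f ` {a..b} \<subseteq> {f a..f b}"
    using assms(3) by (auto simp: mono_on_def)
  then have "bounded (f ` {a..b})"
    using bounded_closed_interval bounded_subset by blast
  ultimately have "(\<lambda>t. f t * M t) absolutely_integrable_on {a..b}"
    by (intro absolutely_integrable_bounded_measurable_product_real) auto
  then show ?thesis
    by (simp add: mult.commute set_lebesgue_integral_eq_integral(1))
qed

lemma integral_antimono_mult_antisymmetric_nonpos:
  fixes M h :: "real \<Rightarrow> real"
  assumes antimono: "\<And>s t. s \<in> {0..a} \<Longrightarrow> t \<in> {0..a} \<Longrightarrow> s \<le> t \<Longrightarrow> M t \<le> M s"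
    and antisymmetric: "\<And>t. h (a - t) = - h t"
    and nonpos: "\<And>t. 0 \<le> t \<Longrightarrow> t \<le> a / 2 \<Longrightarrow> h t \<le> 0"
    and integrable: "(\<lambda>t. M t * h t) integrable_on {0..a}"
  shows "integral {0..a} (\<lambda>t. M t * h t) \<le> 0"
proof -
  define G where "G t = M t * h t" for t
  define I where "I = integral {0..a} G"
  have "(G has_integral I) {0..a}"
    using integrable unfolding G_def I_def by (simp add: integrable_integral)
  moreover have "((\<lambda>t. G (a - t)) has_integral I) {0..a}"
  proof -
    have "((\<lambda>x. G (- x)) has_integral I) {- a..- 0}"
      using \<open>(G has_integral I) {0..a}\<close> by (simp only: has_integral_reflect_real)
    from has_integral_shift_real_ivl[OF this, of "- a"] show ?thesis
      by simp
  qed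
  ultimately have "((\<lambda>t. G t + G (a - t)) has_integral (I + I)) {0..a}"
    by (rule has_integral_add)
  moreover have "G t + G (a - t) \<le> 0" if "t \<in> {0..a}" for t
  proof -
    have "G t + G (a - t) = (M t - M (a - t)) * h t"
      unfolding G_def antisymmetric by (simp add: algebra_simps)
    also have "\<dots> \<le> 0"
    proof (cases "t \<le> a / 2")
      case True
      then have "M (a - t) \<le> M t" and "h t \<le> 0"
        using that by (auto intro: antimono nonpos)
      then show ?thesis
        by (simp add: mult_nonneg_nonpos)
    next
      case False
      then have "M t \<le> M (a - t)" and "h (a - t) \<le> 0"
        using that by (auto intro: antimono nonpos)
      then show ?thesis
        unfolding antisymmetric by (simp add: mult_nonpos_nonneg)
    qed
    finally show ?thesis .
  qed
  ultimately have "I + I \<le> 0"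
    using has_integral_le[of "\<lambda>t. G t + G (a - t)" "I + I" "{0..a}" "\<lambda>_. 0" 0] by auto
  then show ?thesis
    unfolding I_def G_def by simp
qed

lemma J_minus_linear_antisymmetric:
  assumes "mono \<theta>" and "\<And>x. \<theta> (x + pi) = \<theta> x + pi"
  shows "J \<theta> (pi / 2 - t) - 2 / pi * (pi / 2 - t) = - (J \<theta> t - 2 / pi * t)"
proof -
  have "J \<theta> (pi / 2 - t) = 1 - J \<theta> t"
    using J_add_J_complement[where \<theta> = \<theta>, OF assms, of t] by linarith
  then show ?thesis
    by (simp add: right_diff_distrib)
qed

theorem lemmaA1:
  fixes \<theta> M :: "real \<Rightarrow> real"
  assumes "mono \<theta>"
    and "\<And>x. \<theta> (x + pi) = \<theta> x + pi"
    and "\<And>t. t \<in> {0..pi/2} \<Longrightarrow> M t \<ge> 0"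
    and "\<And>s t. s \<in> {0..pi/2} \<Longrightarrow> t \<in> {0..pi/2} \<Longrightarrow> s \<le> t \<Longrightarrow> M t \<le> M s"
  shows "integral {0..pi/2} (\<lambda>\<tau>. M \<tau> * J \<theta> \<tau>)
           \<le> (2 / pi) * integral {0..pi/2} (\<lambda>\<tau>. M \<tau> * \<tau>)"
proof -
  have "mono_on {0..pi/2} (J \<theta>)"
    using J_mono[where \<theta> = \<theta>, OF assms(1,2)] by (auto simp: mono_on_def)
  then have MJ: "(\<lambda>\<tau>. M \<tau> * J \<theta> \<tau>) integrable_on {0..pi/2}"
    using assms(3,4) by (intro integrable_antimono_nonneg_mult_mono_on)
  have "(\<lambda>\<tau>. M \<tau> * \<tau>) integrable_on {0..pi/2}"
    using assms(3,4) by (intro integrable_antimono_nonneg_mult_mono_on mono_onI)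
  then have Mid: "(\<lambda>\<tau>. 2 / pi * (M \<tau> * \<tau>)) integrable_on {0..pi/2}"
    by simp
  have split: "(\<lambda>\<tau>. M \<tau> * (J \<theta> \<tau> - 2 / pi * \<tau>))
      = (\<lambda>\<tau>. M \<tau> * J \<theta> \<tau> - 2 / pi * (M \<tau> * \<tau>))"
    by (simp add: fun_eq_iff algebra_simps)
  have "integral {0..pi/2} (\<lambda>\<tau>. M \<tau> * (J \<theta> \<tau> - 2 / pi * \<tau>)) \<le> 0"
  proof (rule integral_antimono_mult_antisymmetric_nonpos)
    show "J \<theta> t - 2 / pi * t \<le> 0" if "0 \<le> t" "t \<le> pi / 2 / 2" for t
      using J_le_linear[where \<theta> = \<theta>, OF assms(1,2)] that by simp
    show "(\<lambda>\<tau>. M \<tau> * (J \<theta> \<tau> - 2 / pi * \<tau>)) integrable_on {0..pi/2}"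
      unfolding split using MJ Mid by (rule integrable_diff)
  qed (use assms(4) J_minus_linear_antisymmetric[where \<theta> = \<theta>, OF assms(1,2)] in auto)
  then show ?thesis
    unfolding split using integral_diff[OF MJ Mid] by simp
qed

end
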